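(* Fix $d,n\ge1$, $C_{\mathsf{MSE}}>0$ and set $C_0=C_{\mathsf{MSE}}d$. Suppose there exist a probability measure $\nu$ on $\mathbb R$ and a constant $c_{\mathrm{sc}}>0$ with the following property: for every random element $W$ (taking values in some measurable space $\mathcal W$) whose law does not depend on $\theta$, and every measurable $g\colon\mathbb R^n\times\mathcal W\to\mathbb R$, if, with $Z_1,\dots,Z_n$ i.i.d. $\mathcal N(\theta,1)$ independent of $W$, one has $\sup_{\theta\in\mathbb R}\mathbb E[(g(Z,W)-\theta)^2]\le C_0/n$, then $\int\mathrm{Var}_\theta(g(Z,W))\,d\nu(\theta)\ge c_{\mathrm{sc}}/n$ (variance over both $Z$ and $W$). Then every measurable $f\colon(\mathbb R^d)^n\to\mathbb R^d$ with $\sup_{\mu\in\mathbb R^d}\mathbb E_{X\sim\mathcal N(\mu,\mathbb I_d)^{\otimes n}}\|f(X)-\mu\|_2^2\le C_{\mathsf{MSE}}\frac dn$ admits $\mu^*\in\mathbb R^d$ with $\mathrm{Var}_{\mu^*}(f)\ge c_{\mathrm{sc}}\frac dn$.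
   Context: $\mathrm{Var}_\mu(f)=\mathbb E_X\|f(X)-\mathbb E_Xf(X)\|_2^2$ for $X\sim\mathcal N(\mu,\mathbb I_d)^{\otimes n}$. *)

theory Defs
  imports "HOL-Probability.Probability"
begin

definition gauss1 :: "real \<Rightarrow> real measure" where
  "gauss1 m = density lborel (normal_density m 1)"

definition gauss_n :: "real \<Rightarrow> ('n::finite \<Rightarrow> real) measure" where
  "gauss_n \<theta> = PiM UNIV (\<lambda>_. gauss1 \<theta>)"

text \<open>N(mu, I_d)^{tensor n} on (R^d)^n; a point of R^d is a function 'd => real,
  a sample X is a function 'n => 'd => real (X k = k-th sample).\<close>
definition gauss_sample :: "('d::finite \<Rightarrow> real) \<Rightarrow> ('n::finite \<Rightarrow> 'd \<Rightarrow> real) measure" where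
  "gauss_sample \<mu> = PiM UNIV (\<lambda>_. PiM UNIV (\<lambda>i. gauss1 (\<mu> i)))"

definition sqnorm :: "('d::finite \<Rightarrow> real) \<Rightarrow> real" where
  "sqnorm v = (\<Sum>i\<in>UNIV. (v i)\<^sup>2)"

definition vmean :: "'a measure \<Rightarrow> ('a \<Rightarrow> 'd::finite \<Rightarrow> real) \<Rightarrow> 'd \<Rightarrow> real" where
  "vmean M f = (\<lambda>i. \<integral>x. f x i \<partial>M)"

definition vvar :: "'a measure \<Rightarrow> ('a \<Rightarrow> 'd::finite \<Rightarrow> real) \<Rightarrow> ennreal" where
  "vvar M f = (\<integral>\<^sup>+x. ennreal (sqnorm (\<lambda>i. f x i - vmean M f i)) \<partial>M)"

definition svar :: "'a measure \<Rightarrow> ('a \<Rightarrow> real) \<Rightarrow> ennreal" where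
  "svar M g = (\<integral>\<^sup>+x. ennreal ((g x - (\<integral>y. g y \<partial>M))\<^sup>2) \<partial>M)"

end

theory Submission
  imports Defs
begin

(* Fix a coordinate j and the remaining coordinates of the mean.  Planting a one-dimensional
   sample Z ~ N(theta,1)^n as the j-th coordinate of an otherwise N(mu,I_d)^n-distributed sample W
   produces an N(mu(j := theta), I_d)^n sample, so the j-th output of f becomes a scalar estimator
   g(Z,W) of theta, with W independent of theta, whose mean squared error is at most that of f.
   The one-dimensional hypothesis then bounds the nu-average of Var(f_j) along every line in
   direction j by c_sc/n.  By Fubini the nu^d-average of Var_mu(f_j) is at least c_sc/n; summing over
   j, the nu^d-average of Var_mu(f) is at least c_sc d/n, so some mu* attains this value. *)

lemma PiM_PiM_box_eq:
  assumes "\<And>k i. A k i \<subseteq> space (L k i)"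
  shows "{X \<in> space (PiM UNIV (\<lambda>k. PiM UNIV (L k))). \<forall>k i. X k i \<in> A k i}
    = PiE UNIV (\<lambda>k. PiE UNIV (A k))"
  using assms by (fastforce simp: space_PiM PiE_iff)

lemma sets_PiM_PiM_box:
  fixes L :: "'k::finite \<Rightarrow> 'i::finite \<Rightarrow> 'a measure"
  assumes "\<And>k i. A k i \<in> sets (L k i)"
  shows "{X \<in> space (PiM UNIV (\<lambda>k. PiM UNIV (L k))). \<forall>k i. X k i \<in> A k i}
    \<in> sets (PiM UNIV (\<lambda>k. PiM UNIV (L k)))"
proof -
  have "A k i \<subseteq> space (L k i)" for k i
    using assms by (rule sets.sets_into_space)
  then show ?thesis
    using assms by (auto simp: PiM_PiM_box_eq intro!: sets_PiM_I_finite)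
qed

lemma emeasure_PiM_PiE_UNIV:
  fixes M :: "'i::finite \<Rightarrow> 'a measure"
  assumes "\<And>i. prob_space (M i)" and "\<And>i. A i \<in> sets (M i)"
  shows "emeasure (PiM UNIV M) (PiE UNIV A) = (\<Prod>i\<in>UNIV. emeasure (M i) (A i))"
proof -
  interpret product_prob_space M
    using assms(1) by (rule product_prob_spaceI)
  show ?thesis
    using assms(2) by (simp add: emeasure_PiM)
qed

lemma emeasure_PiM_PiM_box:
  fixes L :: "'k::finite \<Rightarrow> 'i::finite \<Rightarrow> 'a measure"
  assumes "\<And>k i. prob_space (L k i)" and "\<And>k i. A k i \<in> sets (L k i)"
  shows "emeasure (PiM UNIV (\<lambda>k. PiM UNIV (L k)))
      {X \<in> space (PiM UNIV (\<lambda>k. PiM UNIV (L k))). \<forall>k i. X k i \<in> A k i}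
    = (\<Prod>k\<in>UNIV. \<Prod>i\<in>UNIV. emeasure (L k i) (A k i))"
  using assms by (simp add: PiM_PiM_box_eq sets.sets_into_space emeasure_PiM_PiE_UNIV prob_space_PiM
    sets_PiM_I_finite)

lemma measurable_PiM_PiM_entry:
  "(\<lambda>X. X k i) \<in> measurable (PiM UNIV (\<lambda>k. PiM UNIV (L k))) (L k i)"
  by (auto intro!: measurable_PiM_component_rev)

lemma measurable_case_prod_PiM:
  "case_prod \<in> measurable (PiM UNIV (\<lambda>k. PiM UNIV (L k))) (PiM UNIV (case_prod L))"
  by (intro measurable_abs_UNIV) (auto intro!: measurable_PiM_component_rev)

lemma measurable_curry_PiM:
  "curry \<in> measurable (PiM UNIV (case_prod L)) (PiM UNIV (\<lambda>k. PiM UNIV (L k)))"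
  unfolding curry_def by (intro measurable_abs_UNIV) (auto intro!: measurable_PiM_component_rev)

lemma distr_case_prod_PiM_PiM:
  fixes L :: "'k::finite \<Rightarrow> 'i::finite \<Rightarrow> 'a measure" and M :: "('k \<Rightarrow> 'i \<Rightarrow> 'a) measure"
  assumes L: "\<And>k i. prob_space (L k i)"
    and sets_M: "sets M = sets (PiM UNIV (\<lambda>k. PiM UNIV (L k)))"
    and box: "\<And>A. (\<And>k i. A k i \<in> sets (L k i)) \<Longrightarrow>
      emeasure M {X \<in> space M. \<forall>k i. X k i \<in> A k i} = (\<Prod>k\<in>UNIV. \<Prod>i\<in>UNIV. emeasure (L k i) (A k i))"
  shows "distr M (PiM UNIV (case_prod L)) case_prod = PiM UNIV (case_prod L)"
proof -
  interpret flat: product_prob_space "case_prod L"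
    using L by (intro product_prob_spaceI) (simp add: split_beta)
  have meas: "case_prod \<in> measurable M (PiM UNIV (case_prod L))"
    using measurable_case_prod_PiM by (simp add: measurable_cong_sets[OF sets_M refl])
  show ?thesis
  proof (rule flat.PiM_eqI)
    fix A assume A: "\<And>p. p \<in> UNIV \<Longrightarrow> A p \<in> sets (case_prod L p)"
    have A': "A (k, i) \<in> sets (L k i)" for k i
      using A[of "(k, i)"] by simp
    have "case_prod -` PiE UNIV A \<inter> space M = {X \<in> space M. \<forall>k i. X k i \<in> A (k, i)}"
      by (auto simp: PiE_iff)
    then have "emeasure (distr M (PiM UNIV (case_prod L)) case_prod) (PiE UNIV A)
        = (\<Prod>k\<in>UNIV. \<Prod>i\<in>UNIV. emeasure (L k i) (A (k, i)))"
      using A meas box[of "\<lambda>k i. A (k, i)", OF A'] by (simp add: emeasure_distr sets_PiM_I_finite)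
    then show "emeasure (distr M (PiM UNIV (case_prod L)) case_prod) (PiE UNIV A)
        = (\<Prod>p\<in>UNIV. emeasure (case_prod L p) (A p))"
      by (simp add: prod.cartesian_product split_beta flip: UNIV_Times_UNIV)
  qed simp_all
qed

(* Flattening to the product over 'k \<times> 'i, where boxes are the standard generator, and currying
   back avoids a separate Dynkin argument for nested boxes. *)
lemma PiM_PiM_eqI:
  fixes L :: "'k::finite \<Rightarrow> 'i::finite \<Rightarrow> 'a measure" and M :: "('k \<Rightarrow> 'i \<Rightarrow> 'a) measure"
  assumes L: "\<And>k i. prob_space (L k i)"
    and sets_M: "sets M = sets (PiM UNIV (\<lambda>k. PiM UNIV (L k)))"
    and box: "\<And>A. (\<And>k i. A k i \<in> sets (L k i)) \<Longrightarrow>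
      emeasure M {X \<in> space M. \<forall>k i. X k i \<in> A k i} = (\<Prod>k\<in>UNIV. \<Prod>i\<in>UNIV. emeasure (L k i) (A k i))"
  shows "M = PiM UNIV (\<lambda>k. PiM UNIV (L k))"
proof -
  let ?N = "PiM UNIV (\<lambda>k. PiM UNIV (L k))" and ?F = "PiM UNIV (case_prod L)"
  have flat_N: "distr ?N ?F case_prod = ?F"
    by (rule distr_case_prod_PiM_PiM[OF L refl emeasure_PiM_PiM_box[OF L]])
  have uncurry: "distr (distr K ?F case_prod) K curry = K" if sets_K: "sets K = sets ?N" for K
  proof -
    have "distr (distr K ?F case_prod) K curry = distr K K (curry \<circ> case_prod)"
      using measurable_case_prod_PiM measurable_curry_PiM
      by (intro distr_distr) (simp_all add: measurable_cong_sets[OF sets_K refl] measurable_cong_sets[OF refl sets_K])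
    then show ?thesis
      by (simp add: comp_def)
  qed
  have "M = distr ?F M curry"
    using uncurry[OF sets_M] distr_case_prod_PiM_PiM[OF L sets_M box] by simp
  also have "\<dots> = distr ?F ?N curry"
    using sets_M by (intro distr_cong) simp_all
  also have "\<dots> = ?N"
    using uncurry[of ?N] flat_N by simp
  finally show ?thesis .
qed

lemma prob_space_gauss1 [simp]: "prob_space (gauss1 m)"
  unfolding gauss1_def by (rule prob_space_normal_density) simp

lemma sets_gauss1 [simp, measurable_cong]: "sets (gauss1 m) = sets borel"
  unfolding gauss1_def by simp

lemma space_gauss1 [simp]: "space (gauss1 m) = UNIV"
  unfolding gauss1_def by simp

lemma gauss1_shift: "gauss1 m = distr (gauss1 0) borel (\<lambda>x. x + m)"
proof -
  interpret prob_space "gauss1 0"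
    by simp
  have "distributed (gauss1 0) lborel (\<lambda>x. x) (normal_density 0 1)"
    unfolding gauss1_def distributed_def by (simp add: distr_id2)
  from normal_density_affine[OF this, of 1 m]
  have "distr (gauss1 0) lborel (\<lambda>x. m + 1 * x) = gauss1 m"
    unfolding distributed_def gauss1_def by simp
  moreover have "distr (gauss1 0) borel (\<lambda>x. x + m) = distr (gauss1 0) lborel (\<lambda>x. m + 1 * x)"
    by (rule distr_cong) simp_all
  ultimately show ?thesis
    by simp
qed

lemma sets_gauss_n [measurable_cong]: "sets (gauss_n \<theta>) = sets (PiM UNIV (\<lambda>_. borel))"
  unfolding gauss_n_def by (simp cong: sets_PiM_cong)

lemma prob_space_gauss_sample [simp]: "prob_space (gauss_sample \<mu>)"
  unfolding gauss_sample_def by (simp add: prob_space_PiM)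

lemma sets_gauss_sample [measurable_cong]:
  "sets (gauss_sample \<mu>) = sets (PiM UNIV (\<lambda>_. PiM UNIV (\<lambda>_. borel)))"
  unfolding gauss_sample_def by (simp cong: sets_PiM_cong)

lemma space_gauss_sample [simp]: "space (gauss_sample \<mu>) = UNIV"
  by (simp add: sets_eq_imp_space_eq[OF sets_gauss_sample] space_PiM)

lemma emeasure_gauss_sample_box:
  assumes "\<And>k i. A k i \<in> sets borel"
  shows "emeasure (gauss_sample \<mu>) {X. \<forall>k i. X k i \<in> A k i}
    = (\<Prod>k\<in>UNIV. \<Prod>i\<in>UNIV. emeasure (gauss1 (\<mu> i)) (A k i))"
  using emeasure_PiM_PiM_box[of "\<lambda>_ i. gauss1 (\<mu> i)" A] assms
  by (simp add: gauss_sample_def[symmetric])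

lemma gauss_sample_eqI:
  assumes "sets M = sets (PiM UNIV (\<lambda>_. PiM UNIV (\<lambda>_. borel)))"
    and "\<And>A. (\<And>k i. A k i \<in> sets borel) \<Longrightarrow>
      emeasure M {X \<in> space M. \<forall>k i. X k i \<in> A k i} = (\<Prod>k\<in>UNIV. \<Prod>i\<in>UNIV. emeasure (gauss1 (\<mu> i)) (A k i))"
  shows "M = gauss_sample \<mu>"
  unfolding gauss_sample_def using assms by (intro PiM_PiM_eqI) (simp_all cong: sets_PiM_cong)

lemma measurable_sample_shift:
  "(\<lambda>(\<mu>, X) k i. X k i + \<mu> i)
    \<in> measurable (PiM UNIV (\<lambda>_. borel :: real measure) \<Otimes>\<^sub>M PiM UNIV (\<lambda>_. PiM UNIV (\<lambda>_. borel)))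
        (PiM UNIV (\<lambda>_. PiM UNIV (\<lambda>_. borel)))"
  unfolding split_beta
proof (intro measurable_abs_UNIV)
  fix k i
  show "(\<lambda>p. snd p k i + fst p i)
    \<in> borel_measurable (PiM UNIV (\<lambda>_. borel :: real measure) \<Otimes>\<^sub>M PiM UNIV (\<lambda>_. PiM UNIV (\<lambda>_. borel)))"
    by (intro borel_measurable_add measurable_compose[OF measurable_snd measurable_PiM_PiM_entry]
      measurable_compose[OF measurable_fst measurable_component_singleton]) simp
qed

lemma measurable_sample_shift_gauss_sample:
  "(\<lambda>X k i. X k i + \<mu> i) \<in> measurable (gauss_sample \<mu>') (PiM UNIV (\<lambda>_. PiM UNIV (\<lambda>_. borel)))"
  using measurable_Pair2[OF measurable_sample_shift, of \<mu>]
  by (simp add: measurable_cong_sets[OF sets_gauss_sample refl] space_PiM)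

lemma gauss_sample_shift:
  fixes \<mu> :: "'d::finite \<Rightarrow> real"
  shows "gauss_sample \<mu> = distr (gauss_sample (\<lambda>_. 0)) (PiM UNIV (\<lambda>_::'n::finite. PiM UNIV (\<lambda>_. borel)))
    (\<lambda>X k i. X k i + \<mu> i)" (is "_ = ?D")
proof (rule gauss_sample_eqI[symmetric])
  fix A :: "'n \<Rightarrow> 'd \<Rightarrow> real set" assume A: "\<And>k i. A k i \<in> sets borel"
  have "emeasure ?D {X \<in> space ?D. \<forall>k i. X k i \<in> A k i}
    = emeasure (gauss_sample (\<lambda>_. 0)) {X. \<forall>k i. X k i \<in> (\<lambda>x. x + \<mu> i) -` A k i}"
    using measurable_sample_shift_gauss_sample A sets_PiM_PiM_box[of A "\<lambda>_ _. borel"]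
    by (subst emeasure_distr) (auto simp: space_PiM)
  also have "\<dots> = (\<Prod>k\<in>UNIV. \<Prod>i\<in>UNIV. emeasure (gauss1 0) ((\<lambda>x. x + \<mu> i) -` A k i))"
    by (intro emeasure_gauss_sample_box measurable_sets_borel[OF _ A]) simp
  also have "\<dots> = (\<Prod>k\<in>UNIV. \<Prod>i\<in>UNIV. emeasure (gauss1 (\<mu> i)) (A k i))"
    using A by (simp add: gauss1_shift[of "\<mu> i" for i] emeasure_distr)
  finally show "emeasure ?D {X \<in> space ?D. \<forall>k i. X k i \<in> A k i}
    = (\<Prod>k\<in>UNIV. \<Prod>i\<in>UNIV. emeasure (gauss1 (\<mu> i)) (A k i))" .
qed simp

definition replace_coord :: "'d \<Rightarrow> ('n \<Rightarrow> 'a) \<Rightarrow> ('n \<Rightarrow> 'd \<Rightarrow> 'a) \<Rightarrow> 'n \<Rightarrow> 'd \<Rightarrow> 'a" where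
  "replace_coord j z X = (\<lambda>k. (X k)(j := z k))"

lemma measurable_replace_coord:
  "(\<lambda>(z, X). replace_coord j z X)
    \<in> measurable (PiM UNIV (\<lambda>_. M) \<Otimes>\<^sub>M PiM UNIV (\<lambda>_. PiM UNIV (\<lambda>_. M))) (PiM UNIV (\<lambda>_. PiM UNIV (\<lambda>_. M)))"
  unfolding replace_coord_def fun_upd_def split_beta
proof (intro measurable_abs_UNIV)
  fix k i
  show "(\<lambda>p. if i = j then fst p k else snd p k i)
    \<in> measurable (PiM UNIV (\<lambda>_. M) \<Otimes>\<^sub>M PiM UNIV (\<lambda>_. PiM UNIV (\<lambda>_. M))) M"
    by (cases "i = j") (auto intro: measurable_compose[OF measurable_fst measurable_component_singleton]
      measurable_compose[OF measurable_snd measurable_PiM_PiM_entry])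
qed

lemma measurable_replace_coord_gauss:
  "(\<lambda>(z, X). replace_coord j z X)
    \<in> measurable (gauss_n \<theta> \<Otimes>\<^sub>M gauss_sample \<mu>) (PiM UNIV (\<lambda>_. PiM UNIV (\<lambda>_. borel)))"
  using measurable_replace_coord
  by (simp add: measurable_cong_sets[OF sets_pair_measure_cong[OF sets_gauss_n sets_gauss_sample] refl])

lemma prod_emeasure_gauss1_fun_upd:
  fixes \<mu> :: "'d::finite \<Rightarrow> real"
  shows "emeasure (gauss1 \<theta>) (A j) * (\<Prod>i\<in>UNIV. emeasure (gauss1 (\<mu> i)) ((A(j := UNIV)) i))
    = (\<Prod>i\<in>UNIV. emeasure (gauss1 ((\<mu>(j := \<theta>)) i)) (A i))"
proof -
  have "(\<Prod>i\<in>UNIV. emeasure (gauss1 (\<mu> i)) ((A(j := UNIV)) i)) = (\<Prod>i\<in>UNIV - {j}. emeasure (gauss1 (\<mu> i)) (A i))"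
    by (simp add: prod.remove[where A=UNIV and x=j] prob_space.emeasure_space_1[of "gauss1 _", simplified])
  moreover have "(\<Prod>i\<in>UNIV. emeasure (gauss1 ((\<mu>(j := \<theta>)) i)) (A i))
    = emeasure (gauss1 \<theta>) (A j) * (\<Prod>i\<in>UNIV - {j}. emeasure (gauss1 (\<mu> i)) (A i))"
    by (simp add: prod.remove[where A=UNIV and x=j])
  ultimately show ?thesis
    by simp
qed

lemma distr_replace_coord_gauss_sample:
  fixes \<mu> :: "'d::finite \<Rightarrow> real"
  shows "distr (gauss_n \<theta> \<Otimes>\<^sub>M gauss_sample \<mu>) (PiM UNIV (\<lambda>_::'n::finite. PiM UNIV (\<lambda>_. borel)))
      (\<lambda>(z, X). replace_coord j z X)
    = gauss_sample (\<mu>(j := \<theta>))" (is "?D = _")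
proof (rule gauss_sample_eqI)
  fix A :: "'n \<Rightarrow> 'd \<Rightarrow> real set" assume A: "\<And>k i. A k i \<in> sets borel"
  let ?P = "gauss_n \<theta> \<Otimes>\<^sub>M (gauss_sample \<mu> :: ('n \<Rightarrow> 'd \<Rightarrow> real) measure)"
  define B where "B k = (A k)(j := UNIV)" for k
  have B: "B k i \<in> sets borel" for k i
    using A by (simp add: B_def)
  have meas: "(\<lambda>(z, X). replace_coord j z X) \<in> measurable ?P (PiM UNIV (\<lambda>_::'n. PiM UNIV (\<lambda>_. borel)))"
    by (rule measurable_replace_coord_gauss)
  have "(\<lambda>(z, X). replace_coord j z X) -` {X \<in> space ?D. \<forall>k i. X k i \<in> A k i} \<inter> space ?P
    = PiE UNIV (\<lambda>k. A k j) \<times> {X. \<forall>k i. X k i \<in> B k i}"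
    by (auto simp: space_pair_measure sets_eq_imp_space_eq[OF sets_gauss_n] space_PiM PiE_iff
      replace_coord_def B_def) metis+
  then have "emeasure ?D {X \<in> space ?D. \<forall>k i. X k i \<in> A k i}
    = emeasure ?P (PiE UNIV (\<lambda>k. A k j) \<times> {X. \<forall>k i. X k i \<in> B k i})"
    using meas sets_PiM_PiM_box[of A "\<lambda>_ _. borel"] A
    by (simp add: emeasure_distr)
  also have "\<dots> = emeasure (gauss_n \<theta>) (PiE UNIV (\<lambda>k. A k j)) * emeasure (gauss_sample \<mu>) {X. \<forall>k i. X k i \<in> B k i}"
    using A sets_PiM_PiM_box[of B "\<lambda>_ _. borel"] B
    by (intro sigma_finite_measure.emeasure_pair_measure_Times prob_space_imp_sigma_finite)
      (auto simp: sets_gauss_n sets_gauss_sample space_PiM intro!: sets_PiM_I_finite)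
  also have "\<dots> = (\<Prod>k\<in>UNIV. emeasure (gauss1 \<theta>) (A k j) * (\<Prod>i\<in>UNIV. emeasure (gauss1 (\<mu> i)) (B k i)))"
    using A B by (simp add: gauss_n_def emeasure_PiM_PiE_UNIV emeasure_gauss_sample_box prod.distrib)
  also have "\<dots> = (\<Prod>k\<in>UNIV. \<Prod>i\<in>UNIV. emeasure (gauss1 ((\<mu>(j := \<theta>)) i)) (A k i))"
    by (simp only: B_def prod_emeasure_gauss1_fun_upd[where A="A k" for k])
  finally show "emeasure ?D {X \<in> space ?D. \<forall>k i. X k i \<in> A k i}
    = (\<Prod>k\<in>UNIV. \<Prod>i\<in>UNIV. emeasure (gauss1 ((\<mu>(j := \<theta>)) i)) (A k i))" .
qed simp

lemma nn_integral_replace_coord: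
  assumes "h \<in> borel_measurable (PiM UNIV (\<lambda>_. PiM UNIV (\<lambda>_. borel)))"
  shows "(\<integral>\<^sup>+(z, X). h (replace_coord j z X) \<partial>(gauss_n \<theta> \<Otimes>\<^sub>M gauss_sample \<mu>))
    = (\<integral>\<^sup>+X. h X \<partial>gauss_sample (\<mu>(j := \<theta>)))"
proof -
  let ?T = "\<lambda>(z, X). replace_coord j z X"
  have "(\<integral>\<^sup>+X. h X \<partial>gauss_sample (\<mu>(j := \<theta>)))
    = (\<integral>\<^sup>+X. h X \<partial>distr (gauss_n \<theta> \<Otimes>\<^sub>M gauss_sample \<mu>) (PiM UNIV (\<lambda>_. PiM UNIV (\<lambda>_. borel))) ?T)"
    by (simp add: distr_replace_coord_gauss_sample)
  also have "\<dots> = (\<integral>\<^sup>+p. h (?T p) \<partial>(gauss_n \<theta> \<Otimes>\<^sub>M gauss_sample \<mu>))"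
    using assms by (intro nn_integral_distr measurable_replace_coord_gauss) simp
  finally show ?thesis
    by (simp add: split_beta')
qed

lemma svar_distr:
  assumes "T \<in> measurable M N" and "h \<in> borel_measurable N"
  shows "svar (distr M N T) h = svar M (\<lambda>x. h (T x))"
  unfolding svar_def using assms by (simp add: integral_distr nn_integral_distr)

lemma svar_replace_coord:
  assumes "h \<in> borel_measurable (PiM UNIV (\<lambda>_. PiM UNIV (\<lambda>_. borel)))"
  shows "svar (gauss_n \<theta> \<Otimes>\<^sub>M gauss_sample \<mu>) (\<lambda>(z, X). h (replace_coord j z X))
    = svar (gauss_sample (\<mu>(j := \<theta>))) h"
proof -
  let ?T = "\<lambda>(z, X). replace_coord j z X"
  have "svar (gauss_sample (\<mu>(j := \<theta>))) h
    = svar (distr (gauss_n \<theta> \<Otimes>\<^sub>M gauss_sample \<mu>) (PiM UNIV (\<lambda>_. PiM UNIV (\<lambda>_. borel))) ?T) h"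
    by (simp add: distr_replace_coord_gauss_sample)
  also have "\<dots> = svar (gauss_n \<theta> \<Otimes>\<^sub>M gauss_sample \<mu>) (\<lambda>p. h (?T p))"
    using assms by (intro svar_distr measurable_replace_coord_gauss)
  finally show ?thesis
    by (simp add: split_beta')
qed

lemma power2_le_sqnorm: "(v j)\<^sup>2 \<le> sqnorm v"
  unfolding sqnorm_def by (rule member_le_sum) simp_all

lemma coordinate_estimator:
  fixes f :: "('n::finite \<Rightarrow> 'd::finite \<Rightarrow> real) \<Rightarrow> 'd \<Rightarrow> real"
  assumes f_j: "(\<lambda>X. f X j) \<in> borel_measurable (PiM UNIV (\<lambda>_. PiM UNIV (\<lambda>_. borel)))"
    and mse: "\<And>\<mu>. (\<integral>\<^sup>+X. ennreal (sqnorm (\<lambda>i. f X i - \<mu> i)) \<partial>gauss_sample \<mu>) \<le> B"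
  defines "g \<equiv> \<lambda>(z, X). f (replace_coord j z X) j"
  shows "g \<in> borel_measurable (PiM UNIV (\<lambda>_. borel) \<Otimes>\<^sub>M gauss_sample \<mu>)"
    and "\<forall>\<theta>. (\<integral>\<^sup>+p. ennreal ((g p - \<theta>)\<^sup>2) \<partial>(gauss_n \<theta> \<Otimes>\<^sub>M gauss_sample \<mu>)) \<le> B"
    and "svar (gauss_n \<theta> \<Otimes>\<^sub>M gauss_sample \<mu>) g = svar (gauss_sample (\<mu>(j := \<theta>))) (\<lambda>X. f X j)"
proof -
  show "g \<in> borel_measurable (PiM UNIV (\<lambda>_. borel) \<Otimes>\<^sub>M gauss_sample \<mu>)"
    using measurable_compose[OF measurable_replace_coord f_j]
    by (simp add: g_def measurable_cong_sets[OF sets_pair_measure_cong[OF refl sets_gauss_sample] refl] split_beta')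
  show "\<forall>\<theta>. (\<integral>\<^sup>+p. ennreal ((g p - \<theta>)\<^sup>2) \<partial>(gauss_n \<theta> \<Otimes>\<^sub>M gauss_sample \<mu>)) \<le> B"
  proof
    fix \<theta>
    have "(\<integral>\<^sup>+p. ennreal ((g p - \<theta>)\<^sup>2) \<partial>(gauss_n \<theta> \<Otimes>\<^sub>M gauss_sample \<mu>))
      = (\<integral>\<^sup>+X. ennreal ((f X j - \<theta>)\<^sup>2) \<partial>gauss_sample (\<mu>(j := \<theta>)))"
      using f_j nn_integral_replace_coord[of "\<lambda>X. ennreal ((f X j - \<theta>)\<^sup>2)"]
      by (simp add: g_def split_beta' measurable_compose[OF _ measurable_ennreal] borel_measurable_power
        borel_measurable_diff)
    also have "\<dots> \<le> (\<integral>\<^sup>+X. ennreal (sqnorm (\<lambda>i. f X i - (\<mu>(j := \<theta>)) i)) \<partial>gauss_sample (\<mu>(j := \<theta>)))"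
      using power2_le_sqnorm[of "\<lambda>i. f _ i - (\<mu>(j := \<theta>)) i" j]
      by (intro nn_integral_mono ennreal_leI) simp
    also have "\<dots> \<le> B"
      by (rule mse)
    finally show "(\<integral>\<^sup>+p. ennreal ((g p - \<theta>)\<^sup>2) \<partial>(gauss_n \<theta> \<Otimes>\<^sub>M gauss_sample \<mu>)) \<le> B" .
  qed
  show "svar (gauss_n \<theta> \<Otimes>\<^sub>M gauss_sample \<mu>) g = svar (gauss_sample (\<mu>(j := \<theta>))) (\<lambda>X. f X j)"
    unfolding g_def by (rule svar_replace_coord[OF f_j])
qed

lemma measurable_svar_gauss_sample:
  fixes h :: "('n::finite \<Rightarrow> 'd::finite \<Rightarrow> real) \<Rightarrow> real"
  assumes h: "h \<in> borel_measurable (PiM UNIV (\<lambda>_. PiM UNIV (\<lambda>_. borel)))"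
  shows "(\<lambda>\<mu>. svar (gauss_sample \<mu>) h) \<in> borel_measurable (PiM UNIV (\<lambda>_. borel))"
proof -
  let ?G = "gauss_sample (\<lambda>_. 0) :: ('n \<Rightarrow> 'd \<Rightarrow> real) measure"
  interpret G: prob_space ?G
    by simp
  have [measurable]: "(\<lambda>(\<mu>, X). h (\<lambda>k i. X k i + \<mu> i)) \<in> borel_measurable (PiM UNIV (\<lambda>_. borel) \<Otimes>\<^sub>M ?G)"
    using measurable_compose[OF measurable_sample_shift h]
    by (simp add: split_beta' measurable_cong_sets[OF sets_pair_measure_cong[OF refl sets_gauss_sample] refl])
  have "svar (gauss_sample \<mu>) h = svar ?G (\<lambda>X. h (\<lambda>k i. X k i + \<mu> i))" for \<mu>
    by (subst gauss_sample_shift) (rule svar_distr[OF measurable_sample_shift_gauss_sample h])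
  moreover have "(\<lambda>\<mu>. svar ?G (\<lambda>X. h (\<lambda>k i. X k i + \<mu> i))) \<in> borel_measurable (PiM UNIV (\<lambda>_. borel))"
    unfolding svar_def by measurable
  ultimately show ?thesis
    by simp
qed

lemma vvar_eq_sum_svar:
  fixes f :: "'a \<Rightarrow> 'd::finite \<Rightarrow> real"
  assumes "\<And>j. (\<lambda>x. f x j) \<in> borel_measurable M"
  shows "vvar M f = (\<Sum>j\<in>UNIV. svar M (\<lambda>x. f x j))"
  unfolding vvar_def svar_def sqnorm_def vmean_def
  using assms by (simp add: sum_ennreal[symmetric] nn_integral_sum del: sum_ennreal)

lemma nn_integral_PiM_ge_by_coordinate:
  fixes F :: "('i::finite \<Rightarrow> 'a) \<Rightarrow> ennreal"
  assumes M: "prob_space M" and F: "F \<in> borel_measurable (PiM UNIV (\<lambda>_. M))"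
    and coord: "\<And>x. c \<le> (\<integral>\<^sup>+y. F (x(j := y)) \<partial>M)"
  shows "c \<le> (\<integral>\<^sup>+x. F x \<partial>PiM UNIV (\<lambda>_. M))"
proof -
  interpret product_prob_space "\<lambda>_. M"
    using M by (rule product_prob_spaceI)
  interpret rest: prob_space "PiM (UNIV - {j}) (\<lambda>_. M)"
    using M by (rule prob_space_PiM)
  have "c = (\<integral>\<^sup>+x. c \<partial>PiM (UNIV - {j}) (\<lambda>_. M))"
    by (simp add: rest.emeasure_space_1)
  also have "\<dots> \<le> (\<integral>\<^sup>+x. \<integral>\<^sup>+y. F (x(j := y)) \<partial>M \<partial>PiM (UNIV - {j}) (\<lambda>_. M))"
    by (intro nn_integral_mono coord)
  also have "\<dots> = (\<integral>\<^sup>+x. F x \<partial>PiM (insert j (UNIV - {j})) (\<lambda>_. M))"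
    using F by (intro product_nn_integral_insert[symmetric]) simp_all
  also have "\<dots> = (\<integral>\<^sup>+x. F x \<partial>PiM UNIV (\<lambda>_. M))"
    by simp
  finally show ?thesis .
qed

lemma (in prob_space) ex_ge_of_nn_integral_ge:
  assumes f: "f \<in> borel_measurable M" and c: "c \<le> (\<integral>\<^sup>+x. f x \<partial>M)" "c < \<top>"
  shows "\<exists>x\<in>space M. c \<le> f x"
proof (rule ccontr)
  assume "\<not> ?thesis"
  then have less: "x \<in> space M \<Longrightarrow> f x < c" for x
    by (auto simp: not_le)
  have "(\<integral>\<^sup>+x. f x \<partial>M) < (\<integral>\<^sup>+x. c \<partial>M)"
  proof (rule nn_integral_less)
    show "(\<integral>\<^sup>+x. f x \<partial>M) \<noteq> \<infinity>"
      using nn_integral_mono[of M f "\<lambda>_. c"] less c(2)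
      by (auto simp: emeasure_space_1 less_imp_le top_unique)
    show "\<not> (AE x in M. c \<le> f x)"
    proof
      assume "AE x in M. c \<le> f x"
      with AE_space have "AE x in M. False"
        by eventually_elim (auto dest: less)
      then show False
        by (simp add: AE_False emeasure_space_1)
    qed
  qed (use f less in \<open>auto intro: less_imp_le\<close>)
  then show False
    using c(1) by (simp add: emeasure_space_1)
qed

lemma ex_sum_ge_by_coordinates:
  fixes V :: "'i::finite \<Rightarrow> ('i \<Rightarrow> 'a) \<Rightarrow> ennreal"
  assumes M: "prob_space M" and V: "\<And>j. V j \<in> borel_measurable (PiM UNIV (\<lambda>_. M))"
    and coord: "\<And>j x. c \<le> (\<integral>\<^sup>+y. V j (x(j := y)) \<partial>M)" and c: "c < \<top>"
  shows "\<exists>x. of_nat CARD('i) * c \<le> (\<Sum>j\<in>UNIV. V j x)"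
proof -
  have "of_nat CARD('i) * c = (\<Sum>j\<in>(UNIV :: 'i set). c)"
    by simp
  also have "\<dots> \<le> (\<Sum>j\<in>UNIV. \<integral>\<^sup>+x. V j x \<partial>PiM UNIV (\<lambda>_. M))"
    using M V coord by (intro sum_mono nn_integral_PiM_ge_by_coordinate)
  also have "\<dots> = (\<integral>\<^sup>+x. (\<Sum>j\<in>UNIV. V j x) \<partial>PiM UNIV (\<lambda>_. M))"
    using V by (rule nn_integral_sum[symmetric])
  finally have "of_nat CARD('i) * c \<le> (\<integral>\<^sup>+x. (\<Sum>j\<in>UNIV. V j x) \<partial>PiM UNIV (\<lambda>_. M))" .
  moreover have "(\<lambda>x. \<Sum>j\<in>UNIV. V j x) \<in> borel_measurable (PiM UNIV (\<lambda>_. M))"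
    using V by (rule borel_measurable_sum)
  moreover have "of_nat CARD('i) * c < \<top>"
    using c by (simp add: ennreal_mult_less_top of_nat_less_top)
  ultimately show ?thesis
    using prob_space.ex_ge_of_nn_integral_ge[OF prob_space_PiM[OF M]] by blast
qed

theorem lemmaI2:
  fixes C_MSE c_sc :: real
    and \<nu> :: "real measure"
    and f :: "('n::finite \<Rightarrow> 'd::finite \<Rightarrow> real) \<Rightarrow> ('d \<Rightarrow> real)"
  defines "n \<equiv> real CARD('n)" and "d \<equiv> real CARD('d)"
  defines "C0 \<equiv> C_MSE * d"
  assumes C_pos: "C_MSE > 0"
    and nu_prob: "prob_space \<nu>" and nu_sets: "sets \<nu> = sets borel"
    and c_pos: "c_sc > 0"
    and hyp: "\<And>(PW :: ('n \<Rightarrow> 'd \<Rightarrow> real) measure) (g :: ('n \<Rightarrow> real) \<times> ('n \<Rightarrow> 'd \<Rightarrow> real) \<Rightarrow> real).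
        prob_space PW \<Longrightarrow>
        g \<in> borel_measurable (PiM UNIV (\<lambda>_. borel) \<Otimes>\<^sub>M PW) \<Longrightarrow>
        (\<forall>\<theta>. (\<integral>\<^sup>+zw. ennreal ((g zw - \<theta>)\<^sup>2) \<partial>(gauss_n \<theta> \<Otimes>\<^sub>M PW)) \<le> ennreal (C0 / n)) \<Longrightarrow>
        (\<integral>\<^sup>+\<theta>. svar (gauss_n \<theta> \<Otimes>\<^sub>M PW) g \<partial>\<nu>) \<ge> ennreal (c_sc / n)"
    and f_meas: "f \<in> (PiM UNIV (\<lambda>_. PiM UNIV (\<lambda>_. borel)))
                                       \<rightarrow>\<^sub>M PiM UNIV (\<lambda>_. borel)"
    and f_mse: "\<forall>\<mu>. (\<integral>\<^sup>+X. ennreal (sqnorm (\<lambda>i. f X i - \<mu> i)) \<partial>gauss_sample \<mu>) \<le> ennreal (C_MSE * d / n)"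
  shows "\<exists>\<mu>star. vvar (gauss_sample \<mu>star) f \<ge> ennreal (c_sc * d / n)"
proof -
  define V where "V j \<mu> = svar (gauss_sample \<mu> :: ('n \<Rightarrow> 'd \<Rightarrow> real) measure) (\<lambda>X. f X j)" for j \<mu>
  have f_j: "(\<lambda>X. f X j) \<in> borel_measurable (PiM UNIV (\<lambda>_. PiM UNIV (\<lambda>_. borel)))" for j
    using f_meas by measurable
  have "sets (PiM UNIV (\<lambda>_::'d. \<nu>)) = sets (PiM UNIV (\<lambda>_. borel))"
    using nu_sets by (intro sets_PiM_cong) simp_all
  then have V_meas: "V j \<in> borel_measurable (PiM UNIV (\<lambda>_. \<nu>))" for j
    unfolding V_def using measurable_svar_gauss_sample[OF f_j] by (simp cong: measurable_cong_sets)
  have coord: "ennreal (c_sc / n) \<le> (\<integral>\<^sup>+\<theta>. V j (\<mu>(j := \<theta>)) \<partial>\<nu>)" for j \<mu>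
    using hyp[unfolded C0_def, OF prob_space_gauss_sample coordinate_estimator(1,2)[OF f_j f_mse[rule_format]]]
    by (simp add: V_def coordinate_estimator(3)[OF f_j f_mse[rule_format]])
  obtain \<mu> where "of_nat CARD('d) * ennreal (c_sc / n) \<le> (\<Sum>j\<in>UNIV. V j \<mu>)"
    using ex_sum_ge_by_coordinates[OF nu_prob V_meas coord ennreal_less_top] by blast
  moreover have "of_nat CARD('d) * ennreal (c_sc / n) = ennreal (c_sc * d / n)"
    using c_pos by (simp add: d_def n_def ennreal_of_nat_eq_real_of_nat flip: ennreal_mult')
  moreover have "vvar (gauss_sample \<mu>) f = (\<Sum>j\<in>UNIV. V j \<mu>)"
    using f_j by (simp add: V_def vvar_eq_sum_svar measurable_cong_sets[OF sets_gauss_sample refl])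
  ultimately show ?thesis
    by (intro exI[of _ \<mu>]) simp
qed

end
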